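(* Let $p_1,\dots,p_r,q_1,\dots,q_s$ be positive integers with $\sum_ip_i=\sum_jq_j$ and $\gcd(p_1,\dots,p_r,q_1,\dots,q_s)=1$, let $q$ be a prime power and $\lambda\in\mathbb{F}_q^\times$. Then $$|V_\lambda(\mathbb{F}_q^\times)|=\frac{(q-1)^{r+s-2}}{q}+\frac{1}{q(q-1)}\sum_{m=0}^{q-2}\prod_{i=1}^rg(p_im)\prod_{j=1}^sg(-q_jm)\,\omega(\epsilon\lambda)^m,$$ where $\epsilon=(-1)^{q_1+\cdots+q_s}$.
   Context: Fix a nontrivial additive character $\psi_q$ of $\mathbb{F}_q$, a generator $\omega$ of the character group of $\mathbb{F}_q^\times$, and $g(m)=\sum_{x\in\mathbb{F}_q^\times}\omega(x)^m\psi_q(x)$. $V_\lambda(\mathbb{F}_q^\times)$ denotes the set of points $(x_1:\dots:x_r:y_1:\dots:y_s)\in\mathbb{P}^{r+s-1}(\mathbb{F}_q)$ with all coordinates nonzero satisfying $x_1+\cdots+x_r-y_1-\cdots-y_s=0$ and $\lambda x_1^{p_1}\cdots x_r^{p_r}=y_1^{q_1}\cdots y_s^{q_s}$. *)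

theory Defs
  imports Complex_Main
begin

definition gsum :: "('a::{field,finite} \<Rightarrow> complex) \<Rightarrow> ('a \<Rightarrow> complex) \<Rightarrow> int \<Rightarrow> complex" where
  "gsum \<psi> \<omega> m = (\<Sum>x\<in>UNIV - {0}. (\<omega> x) powi m * \<psi> x)"

text \<open>Affine representatives: a list z of length r+s with all entries nonzero;
  x_i = z!i (i<r), y_j = z!(r+j) (j<s).\<close>
definition V_aff :: "'a::{field,finite} \<Rightarrow> nat list \<Rightarrow> nat list \<Rightarrow> 'a list set" where
  "V_aff lam ps qs = {z. length z = length ps + length qs \<and> (\<forall>a\<in>set z. a \<noteq> 0)
      \<and> (\<Sum>i<length ps. z!i) - (\<Sum>j<length qs. z!(length ps + j)) = 0
      \<and> lam * (\<Prod>i<length ps. (z!i) ^ (ps!i)) = (\<Prod>j<length qs. (z!(length ps + j)) ^ (qs!j))}"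

definition proj_pt :: "'a::field list \<Rightarrow> 'a list set" where
  "proj_pt z = {map (\<lambda>a. c * a) z | c. c \<noteq> 0}"

definition V_lambda :: "'a::{field,finite} \<Rightarrow> nat list \<Rightarrow> nat list \<Rightarrow> 'a list set set" where
  "V_lambda lam ps qs = proj_pt ` V_aff lam ps qs"

end

theory Submission
  imports Defs "HOL-Library.Cardinality"
begin

(* Each point of V_lambda is the class of exactly q - 1 nonzero vectors (the two equations are
   homogeneous of the same degree because sum p_i = sum q_j), so it suffices to count vectors.
   The linear equation is detected by (1/q) sum_t psi(t A(z)), the monomial equation u(z) = 1 by
   (1/(q-1)) sum_m omega(u(z))^m, and the resulting sum over vectors factors coordinatewise into
   twisted Gauss sums. For t = 0 these factors are orthogonality sums of omega^(e_i m), and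
   gcd = 1 leaves only m = 0, giving (q-1)^(r+s). For t <> 0 the substitution a -> t a turns each
   factor into g(e_i m) times a power of omega(+-t); the powers of omega(t) cancel because
   sum p_i = sum q_j, leaving omega(epsilon)^m independent of t. *)

lemma sum_lessThan_add:
  fixes f :: "nat \<Rightarrow> 'b::comm_monoid_add"
  shows "(\<Sum>i<r + s. f i) = (\<Sum>i<r. f i) + (\<Sum>j<s. f (r + j))"
  by (induction s) (simp_all add: add.assoc)

lemma prod_lessThan_add:
  fixes f :: "nat \<Rightarrow> 'b::comm_monoid_mult"
  shows "(\<Prod>i<r + s. f i) = (\<Prod>i<r. f i) * (\<Prod>j<s. f (r + j))"
  by (induction s) (simp_all add: mult.assoc)

lemma sum_list_conv_sum_lessThan: "sum_list xs = (\<Sum>i<length xs. xs ! i)"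
  by (simp add: sum_list_sum_nth atLeast0LessThan)

lemma prod_power_nth: "(\<Prod>i<length xs. x ^ (xs ! i * m)) = x ^ (sum_list xs * m)"
  by (simp add: sum_list_conv_sum_lessThan sum_distrib_right power_sum)

lemma sum_lists_length_prod_nth:
  fixes f :: "nat \<Rightarrow> 'a \<Rightarrow> 'b::comm_semiring_1"
  assumes "finite U"
  shows "(\<Sum>z\<in>{z. set z \<subseteq> U \<and> length z = n}. \<Prod>i<n. f i (z ! i)) = (\<Prod>i<n. \<Sum>a\<in>U. f i a)"
proof (induction n arbitrary: f)
  case 0
  have "{z. set z \<subseteq> U \<and> length z = 0} = {[]}" by auto
  then show ?case by simp
next
  case (Suc n)
  let ?Z = "{z. set z \<subseteq> U \<and> length z = n}"
  have lists_Suc: "{z. set z \<subseteq> U \<and> length z = Suc n} = (\<lambda>(a, z). a # z) ` (U \<times> ?Z)"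
    by (auto simp: length_Suc_conv image_iff)
  have inj: "inj_on (\<lambda>(a, z). a # z) (U \<times> ?Z)"
    by (auto simp: inj_on_def)
  have "(\<Sum>z\<in>{z. set z \<subseteq> U \<and> length z = Suc n}. \<Prod>i<Suc n. f i (z ! i))
      = (\<Sum>(a, z)\<in>U \<times> ?Z. f 0 a * (\<Prod>i<n. f (Suc i) (z ! i)))"
    unfolding lists_Suc sum.reindex[OF inj]
    by (intro sum.cong refl) (auto simp del: prod.lessThan_Suc simp add: prod.lessThan_Suc_shift)
  also have "\<dots> = (\<Sum>a\<in>U. f 0 a) * (\<Prod>i<n. \<Sum>a\<in>U. f (Suc i) a)"
    by (simp add: sum.cartesian_product[symmetric] sum_distrib_left[symmetric] sum_distrib_right
        Suc.IH[of "\<lambda>i. f (Suc i)"])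
  also have "\<dots> = (\<Prod>i<Suc n. \<Sum>a\<in>U. f i a)"
    by (simp del: prod.lessThan_Suc add: prod.lessThan_Suc_shift)
  finally show ?case .
qed

lemma Gcd_eq_1_dvd_mult_imp_dvd:
  fixes d m :: nat
  assumes "\<forall>a\<in>S. d dvd a * m" and "Gcd S = 1"
  shows "d dvd m"
proof -
  have "d dvd Gcd ((*) m ` S)" using assms(1) by (auto simp: dvd_Gcd_iff mult.commute)
  also have "Gcd ((*) m ` S) = m" using assms(2) by (simp add: Gcd_mult)
  finally show ?thesis .
qed

lemma card_UNIV_field_ge_2: "CARD('a::{field,finite}) \<ge> 2"
proof -
  have "card {0::'a, 1} \<le> CARD('a)" by (rule card_mono) simp_all
  then show ?thesis by simp
qed

lemma power_card_eq_1_if_mult_closed: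
  fixes H :: "'b::field set"
  assumes "finite H" and "0 \<notin> H" and "\<And>g h. g \<in> H \<Longrightarrow> h \<in> H \<Longrightarrow> g * h \<in> H" and "h \<in> H"
  shows "h ^ card H = 1"
proof -
  have inj: "inj_on ((*) h) H" using assms(2,4) by (auto simp: inj_on_def)
  have "(*) h ` H \<subseteq> H" using assms(3,4) by auto
  then have image: "(*) h ` H = H" using assms(1) card_image[OF inj] by (metis card_subset_eq)
  have "(\<Prod>g\<in>H. g) = (\<Prod>g\<in>H. h * g)" by (subst image[symmetric]) (simp add: prod.reindex[OF inj])
  also have "\<dots> = h ^ card H * (\<Prod>g\<in>H. g)" by (simp add: prod.distrib)
  finally have "(h ^ card H - 1) * (\<Prod>g\<in>H. g) = 0" by (simp add: algebra_simps)
  moreover have "(\<Prod>g\<in>H. g) \<noteq> 0" using assms(1,2) by (auto simp: prod_zero_iff)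
  ultimately show ?thesis by simp
qed

locale additive_character =
  fixes \<psi> :: "'a::field \<Rightarrow> complex"
  assumes add: "\<psi> (x + y) = \<psi> x * \<psi> y"
    and nonzero: "\<psi> x \<noteq> 0"
begin

lemma zero [simp]: "\<psi> 0 = 1"
  using add[of 0 0] nonzero[of 0] by simp

lemma sum: "\<psi> (sum f A) = (\<Prod>i\<in>A. \<psi> (f i))"
  by (induction A rule: infinite_finite_induct) (simp_all add: add)

end

locale nontrivial_additive_character = additive_character \<psi>
  for \<psi> :: "'a::{field,finite} \<Rightarrow> complex" +
  assumes nontrivial: "\<exists>x. \<psi> x \<noteq> 1"
begin

lemma sum_UNIV: "(\<Sum>x\<in>UNIV. \<psi> x) = 0"
proof -
  obtain c where c: "\<psi> c \<noteq> 1" using nontrivial by blast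
  have "(\<Sum>x\<in>UNIV. \<psi> x) = (\<Sum>x\<in>UNIV. \<psi> (x + c))"
    by (rule sum.reindex_bij_witness[where i="\<lambda>x. x + c" and j="\<lambda>x. x - c"]) auto
  also have "\<dots> = \<psi> c * (\<Sum>x\<in>UNIV. \<psi> x)" by (simp add: add sum_distrib_left mult.commute)
  finally have "(\<psi> c - 1) * (\<Sum>x\<in>UNIV. \<psi> x) = 0" by (simp add: algebra_simps)
  then show ?thesis using c by simp
qed

lemma orthogonality: "(\<Sum>t\<in>UNIV. \<psi> (t * a)) = (if a = 0 then of_nat (CARD('a)) else 0)"
proof (cases "a = 0")
  case False
  have "(\<Sum>t\<in>UNIV. \<psi> (t * a)) = (\<Sum>x\<in>UNIV. \<psi> x)"
    by (rule sum.reindex_bij_witness[where i="\<lambda>x. x / a" and j="\<lambda>x. x * a"]) (use False in auto)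
  then show ?thesis using sum_UNIV False by simp
qed simp

end

locale multiplicative_character =
  fixes \<omega> :: "'a::field \<Rightarrow> complex"
  assumes mult: "x \<noteq> 0 \<Longrightarrow> y \<noteq> 0 \<Longrightarrow> \<omega> (x * y) = \<omega> x * \<omega> y"
    and nonzero: "x \<noteq> 0 \<Longrightarrow> \<omega> x \<noteq> 0"
begin

lemma one [simp]: "\<omega> 1 = 1"
  using mult[of 1 1] nonzero[of 1] by simp

lemma prod: "(\<And>i. i \<in> A \<Longrightarrow> x i \<noteq> 0) \<Longrightarrow> \<omega> (\<Prod>i\<in>A. x i) = (\<Prod>i\<in>A. \<omega> (x i))"
  by (induction A rule: infinite_finite_induct) (simp_all add: mult prod_zero_iff)

lemma power: "x \<noteq> 0 \<Longrightarrow> \<omega> (x ^ k) = \<omega> x ^ k"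
  using prod[of "{..<k}" "\<lambda>_. x"] by simp

lemma inverse: "x \<noteq> 0 \<Longrightarrow> \<omega> (inverse x) = inverse (\<omega> x)"
  using mult[of x "inverse x"] by (simp add: inverse_unique)

lemma power_int: "x \<noteq> 0 \<Longrightarrow> \<omega> (x powi k) = \<omega> x powi k"
  by (simp add: power_int_def power inverse)

lemma prod_power_int:
  "(\<And>i. i \<in> A \<Longrightarrow> x i \<noteq> 0) \<Longrightarrow> \<omega> (\<Prod>i\<in>A. x i powi k i) = (\<Prod>i\<in>A. \<omega> (x i) powi k i)"
  by (simp add: prod power_int power_int_not_zero)

end

locale generating_character = multiplicative_character \<omega>
  for \<omega> :: "'a::{field,finite} \<Rightarrow> complex" +
  assumes generates: "(\<forall>x. x \<noteq> 0 \<longrightarrow> \<omega> x ^ k = 1) \<longleftrightarrow> (CARD('a) - 1) dvd k"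
begin

lemma power_card_minus_1: "x \<noteq> 0 \<Longrightarrow> \<omega> x ^ (CARD('a) - 1) = 1"
  using generates[of "CARD('a) - 1"] by simp

lemma inj_on_nonzero: "inj_on \<omega> (UNIV - {0})"
proof -
  let ?U = "UNIV - {0 :: 'a}"
  have closed: "g * h \<in> \<omega> ` ?U" if gh: "g \<in> \<omega> ` ?U" "h \<in> \<omega> ` ?U" for g h
  proof -
    obtain x y where "x \<noteq> 0" "y \<noteq> 0" "g = \<omega> x" "h = \<omega> y" using gh by auto
    then show ?thesis by (auto simp: mult intro!: image_eqI[of _ _ "x * y"])
  qed
  have "\<omega> x ^ card (\<omega> ` ?U) = 1" if "x \<noteq> 0" for x
    by (rule power_card_eq_1_if_mult_closed) (use that nonzero closed in \<open>auto simp: image_iff\<close>)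
  then have "(CARD('a) - 1) dvd card (\<omega> ` ?U)"
    using generates by blast
  moreover have "card (\<omega> ` ?U) \<le> CARD('a) - 1"
    using card_image_le[of ?U \<omega>] by (simp add: card_Diff_singleton)
  moreover have "card (\<omega> ` ?U) > 0"
    using card_gt_0_iff[of "\<omega> ` ?U"] imageI[of 1 ?U \<omega>] by auto
  ultimately have "card (\<omega> ` ?U) = card ?U"
    by (metis card_Diff_singleton dvd_imp_le finite le_antisym UNIV_I)
  then show ?thesis by (intro eq_card_imp_inj_on) auto
qed

lemma eq_1_iff: "x \<noteq> 0 \<Longrightarrow> \<omega> x = 1 \<longleftrightarrow> x = 1"
  using inj_onD[OF inj_on_nonzero, of x 1] by auto

lemma sum_powers:
  assumes "u \<noteq> 0"
  shows "(\<Sum>m<CARD('a) - 1. \<omega> u ^ m) = (if u = 1 then of_nat (CARD('a) - 1) else 0)"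
  using assms power_card_minus_1[OF assms] by (auto simp: geometric_sum eq_1_iff)

lemma power_int_trivial_iff:
  "(\<forall>x. x \<noteq> 0 \<longrightarrow> \<omega> x powi k = 1) \<longleftrightarrow> int (CARD('a) - 1) dvd k"
proof -
  have "\<omega> x powi k = 1 \<longleftrightarrow> \<omega> x ^ nat \<bar>k\<bar> = 1" for x
    by (cases "k \<ge> 0") (simp_all add: power_int_def power_inverse inverse_eq_1_iff)
  then show ?thesis using generates[of "nat \<bar>k\<bar>"] by simp
qed

lemma sum_power_int:
  "(\<Sum>a\<in>UNIV - {0}. \<omega> a powi k) =
     (if int (CARD('a) - 1) dvd k then of_nat (CARD('a) - 1) else 0)"
proof (cases "int (CARD('a) - 1) dvd k")
  case True
  then have "(\<Sum>a\<in>UNIV - {0}. \<omega> a powi k) = (\<Sum>a\<in>UNIV - {0 :: 'a}. 1)"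
    using power_int_trivial_iff by (intro sum.cong) auto
  then show ?thesis using True by (simp add: card_Diff_singleton)
next
  case False
  then obtain c where c: "c \<noteq> 0" "\<omega> c powi k \<noteq> 1" using power_int_trivial_iff by blast
  have "(\<Sum>a\<in>UNIV - {0}. \<omega> a powi k) = (\<Sum>a\<in>UNIV - {0}. \<omega> (c * a) powi k)"
    by (rule sum.reindex_bij_witness[where i="\<lambda>x. c * x" and j="\<lambda>x. x / c"]) (use c in auto)
  also have "\<dots> = \<omega> c powi k * (\<Sum>a\<in>UNIV - {0}. \<omega> a powi k)"
    unfolding sum_distrib_left by (intro sum.cong) (use c in \<open>auto simp: mult power_int_mult_distrib\<close>)
  finally have "(\<omega> c powi k - 1) * (\<Sum>a\<in>UNIV - {0}. \<omega> a powi k) = 0" by (simp add: algebra_simps)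
  then show ?thesis using c False by simp
qed

lemma gsum_dilate:
  assumes "c \<noteq> 0"
  shows "(\<Sum>a\<in>UNIV - {0}. \<psi> (c * a) * \<omega> a powi k) = \<omega> c powi (- k) * gsum \<psi> \<omega> k"
proof -
  have "gsum \<psi> \<omega> k = (\<Sum>a\<in>UNIV - {0}. \<omega> (c * a) powi k * \<psi> (c * a))"
    unfolding gsum_def
    by (rule sum.reindex_bij_witness[where i="\<lambda>x. c * x" and j="\<lambda>x. x / c"]) (use assms in auto)
  also have "\<dots> = \<omega> c powi k * (\<Sum>a\<in>UNIV - {0}. \<psi> (c * a) * \<omega> a powi k)"
    unfolding sum_distrib_left
    by (intro sum.cong) (use assms in \<open>auto simp: mult power_int_mult_distrib\<close>)
  finally show ?thesis
    using assms nonzero[OF assms] by (simp add: power_int_minus field_simps power_int_not_zero)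
qed

end

lemma scale_mem_V_aff:
  assumes "sum_list ps = sum_list qs" and z: "z \<in> V_aff lam ps qs" and "c \<noteq> 0"
  shows "map ((*) c) z \<in> V_aff lam ps qs"
proof -
  let ?r = "length ps" and ?s = "length qs" and ?w = "map ((*) c) z"
  have len: "length z = ?r + ?s" and nz: "\<forall>a\<in>set z. a \<noteq> 0"
    and lin: "(\<Sum>i<?r. z ! i) - (\<Sum>j<?s. z ! (?r + j)) = 0"
    and mon: "lam * (\<Prod>i<?r. (z ! i) ^ (ps ! i)) = (\<Prod>j<?s. (z ! (?r + j)) ^ (qs ! j))"
    using z unfolding V_aff_def by auto
  have "(\<Sum>i<?r. ?w ! i) - (\<Sum>j<?s. ?w ! (?r + j)) = c * ((\<Sum>i<?r. z ! i) - (\<Sum>j<?s. z ! (?r + j)))"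
    by (simp add: len sum_distrib_left right_diff_distrib)
  moreover have "(\<Prod>i<?r. (?w ! i) ^ (ps ! i)) = c ^ sum_list ps * (\<Prod>i<?r. (z ! i) ^ (ps ! i))"
    and "(\<Prod>j<?s. (?w ! (?r + j)) ^ (qs ! j)) = c ^ sum_list qs * (\<Prod>j<?s. (z ! (?r + j)) ^ (qs ! j))"
    by (simp_all add: len power_mult_distrib prod.distrib power_sum sum_list_conv_sum_lessThan)
  ultimately show ?thesis
    using assms(1,3) len nz lin mon unfolding V_aff_def by (auto simp: mult.left_commute)
qed

lemma proj_pt_scale:
  assumes "a \<noteq> 0"
  shows "proj_pt (map ((*) a) z) = proj_pt z"
proof -
  have "{map (\<lambda>x. (c * a) * x) z | c. c \<noteq> 0} = {map (\<lambda>x. c * x) z | c. c \<noteq> 0}"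
  proof (intro equalityI subsetI)
    fix w assume "w \<in> {map (\<lambda>x. c * x) z | c. c \<noteq> 0}"
    then obtain c where "c \<noteq> 0" "w = map (\<lambda>x. ((c / a) * a) * x) z" using assms by auto
    moreover have "c / a \<noteq> 0" using assms \<open>c \<noteq> 0\<close> by simp
    ultimately show "w \<in> {map (\<lambda>x. (c * a) * x) z | c. c \<noteq> 0}" by blast
  qed (use assms in auto)
  then show ?thesis unfolding proj_pt_def by (simp add: comp_def mult.assoc)
qed

lemma proj_pt_eq_if_not_disjoint:
  assumes "proj_pt z1 \<inter> proj_pt z2 \<noteq> {}"
  shows "proj_pt z1 = proj_pt z2"
proof -
  obtain w where "w \<in> proj_pt z1" "w \<in> proj_pt z2" using assms by blast
  then obtain a b where ab: "a \<noteq> 0" "b \<noteq> 0" "map ((*) a) z1 = map ((*) b) z2"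
    unfolding proj_pt_def by blast
  have "proj_pt z1 = proj_pt (map ((*) a) z1)" using proj_pt_scale[OF ab(1)] by simp
  also have "\<dots> = proj_pt z2" using proj_pt_scale[OF ab(2)] ab(3) by simp
  finally show ?thesis .
qed

lemma card_proj_pt:
  fixes z :: "'a::{field,finite} list"
  assumes "z \<noteq> []" and "\<forall>x\<in>set z. x \<noteq> 0"
  shows "card (proj_pt z) = CARD('a) - 1"
proof -
  have "inj_on (\<lambda>c. map ((*) c) z) (UNIV - {0})"
  proof (rule inj_onI)
    fix c d assume "map ((*) c) z = map ((*) d) z"
    then have "c * hd z = d * hd z" using assms(1) by (metis hd_map)
    then show "c = d" using assms by simp
  qed
  moreover have "proj_pt z = (\<lambda>c. map ((*) c) z) ` (UNIV - {0})"
    unfolding proj_pt_def by auto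
  ultimately show ?thesis by (simp add: card_image card_Diff_singleton)
qed

lemma card_V_aff:
  fixes lam :: "'a::{field,finite}"
  assumes "sum_list ps = sum_list qs" and "ps @ qs \<noteq> []"
  shows "card (V_aff lam ps qs) = (CARD('a) - 1) * card (V_lambda lam ps qs)"
proof -
  let ?V = "V_aff lam ps qs"
  have fin: "finite ?V"
    by (rule finite_subset[OF _ finite_lists_length_eq[OF finite_class.finite_UNIV]]) (auto simp: V_aff_def)
  have union: "\<Union>(V_lambda lam ps qs) = ?V"
  proof (intro equalityI subsetI)
    fix w assume "w \<in> \<Union>(V_lambda lam ps qs)"
    then obtain z c where "z \<in> ?V" "c \<noteq> 0" "w = map ((*) c) z"
      unfolding V_lambda_def proj_pt_def by auto
    then show "w \<in> ?V" using scale_mem_V_aff[OF assms(1)] by simp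
  next
    fix w assume "w \<in> ?V"
    moreover have "w \<in> proj_pt w"
      unfolding proj_pt_def by (auto intro!: exI[of _ 1] map_idI[symmetric])
    ultimately show "w \<in> \<Union>(V_lambda lam ps qs)" unfolding V_lambda_def by blast
  qed
  have card_class: "card c = CARD('a) - 1" if c: "c \<in> V_lambda lam ps qs" for c
  proof -
    obtain z where z: "z \<in> ?V" "c = proj_pt z" using c unfolding V_lambda_def by auto
    then have "z \<noteq> []" "\<forall>x\<in>set z. x \<noteq> 0" using assms(2) unfolding V_aff_def by auto
    then show ?thesis unfolding z(2) by (rule card_proj_pt)
  qed
  have disjoint: "c1 \<inter> c2 = {}"
    if "c1 \<in> V_lambda lam ps qs" "c2 \<in> V_lambda lam ps qs" "c1 \<noteq> c2" for c1 c2
    using that unfolding V_lambda_def by (metis imageE proj_pt_eq_if_not_disjoint)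
  have "finite (V_lambda lam ps qs)" unfolding V_lambda_def using fin by simp
  from card_partition[OF this _ card_class disjoint] show ?thesis
    using fin union by simp
qed

locale V_lambda_count =
  psi: nontrivial_additive_character \<psi> + omega: generating_character \<omega>
  for \<psi> \<omega> :: "'a::{field,finite} \<Rightarrow> complex" +
  fixes ps qs :: "nat list" and lam :: 'a
  assumes ps_pos: "\<forall>a\<in>set ps. a > 0"
    and qs_pos: "\<forall>b\<in>set qs. b > 0"
    and sums: "sum_list ps = sum_list qs"
    and Gcd_eq_1: "Gcd (set (ps @ qs)) = 1"
    and lam_nonzero: "lam \<noteq> 0"
begin

abbreviation "r \<equiv> length ps"
abbreviation "s \<equiv> length qs"
abbreviation "N \<equiv> length ps + length qs"
abbreviation "vectors \<equiv> {z. set z \<subseteq> UNIV - {0 :: 'a} \<and> length z = N}"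

(* Coordinate i < r of a vector is x_(i+1) and coordinate r + j is y_(j+1); the defining equations
   become linear_form z = 0 and monomial z = 1. *)
definition coord_sign :: "nat \<Rightarrow> 'a" where
  "coord_sign i = (if i < r then 1 else -1)"

definition coord_exp :: "nat \<Rightarrow> int" where
  "coord_exp i = (if i < r then 1 else -1) * int ((ps @ qs) ! i)"

definition linear_form :: "'a list \<Rightarrow> 'a" where
  "linear_form z = (\<Sum>i<N. coord_sign i * z ! i)"

definition monomial :: "'a list \<Rightarrow> 'a" where
  "monomial z = lam * (\<Prod>i<N. (z ! i) powi coord_exp i)"

lemma length_ge_2: "N \<ge> 2"
proof -
  have sum_list_eq_0: "sum_list xs = 0 \<longleftrightarrow> xs = []" if "\<forall>a\<in>set xs. a > 0" for xs :: "nat list"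
    using that by (cases xs) auto
  have "ps = [] \<longleftrightarrow> qs = []"
    using sum_list_eq_0 ps_pos qs_pos sums by metis
  moreover have "ps @ qs \<noteq> []" using Gcd_eq_1 by auto
  ultimately show ?thesis by (cases ps; cases qs) auto
qed

lemma nth_vector_nonzero: "z \<in> vectors \<Longrightarrow> i < N \<Longrightarrow> z ! i \<noteq> 0"
  using nth_mem[of i z] by fastforce

lemma monomial_eq_1_iff:
  assumes z: "z \<in> vectors"
  shows "monomial z = 1 \<longleftrightarrow> lam * (\<Prod>i<r. (z ! i) ^ (ps ! i)) = (\<Prod>j<s. (z ! (r + j)) ^ (qs ! j))"
proof -
  have "monomial z = lam * (\<Prod>i<r. (z ! i) ^ (ps ! i)) / (\<Prod>j<s. (z ! (r + j)) ^ (qs ! j))"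
    unfolding monomial_def prod_lessThan_add
    by (simp add: coord_exp_def nth_append power_int_minus prod_inversef[unfolded comp_def] divide_inverse mult.assoc)
  moreover have "(\<Prod>j<s. (z ! (r + j)) ^ (qs ! j)) \<noteq> 0"
    using nth_vector_nonzero[OF z] by (simp add: prod_zero_iff)
  ultimately show ?thesis by simp
qed

lemma V_aff_eq: "V_aff lam ps qs = {z \<in> vectors. linear_form z = 0 \<and> monomial z = 1}"
proof -
  have "linear_form z = (\<Sum>i<r. z ! i) - (\<Sum>j<s. z ! (r + j))" for z
    unfolding linear_form_def sum_lessThan_add by (simp add: coord_sign_def sum_negf)
  moreover have "set z \<subseteq> UNIV - {0} \<longleftrightarrow> (\<forall>a\<in>set z. a \<noteq> 0)" for z :: "'a list"
    by auto
  ultimately show ?thesis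
    unfolding V_aff_def using monomial_eq_1_iff by auto
qed

lemma indicator_linear_form:
  "(if linear_form z = 0 then 1 else 0 :: complex) =
     1 / of_nat CARD('a) * (\<Sum>t\<in>UNIV. \<Prod>i<N. \<psi> (t * coord_sign i * z ! i))"
proof -
  have "(\<Sum>t\<in>UNIV. \<Prod>i<N. \<psi> (t * coord_sign i * z ! i)) = (\<Sum>t\<in>UNIV. \<psi> (t * linear_form z))"
    unfolding linear_form_def sum_distrib_left psi.sum by (simp add: mult.assoc)
  then show ?thesis by (simp add: psi.orthogonality)
qed

lemma indicator_monomial:
  assumes z: "z \<in> vectors"
  shows "(if monomial z = 1 then 1 else 0 :: complex) =
     1 / of_nat (CARD('a) - 1) * (\<Sum>m<CARD('a) - 1. \<omega> lam ^ m * (\<Prod>i<N. \<omega> (z ! i) powi (coord_exp i * int m)))"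
proof -
  have nonzero: "z ! i \<noteq> 0" if "i \<in> {..<N}" for i
    using nth_vector_nonzero[OF z] that by simp
  then have "\<omega> (\<Prod>i<N. (z ! i) powi coord_exp i) = (\<Prod>i<N. \<omega> (z ! i) powi coord_exp i)"
    by (rule omega.prod_power_int)
  then have "\<omega> (monomial z) = \<omega> lam * (\<Prod>i<N. \<omega> (z ! i) powi coord_exp i)"
    unfolding monomial_def using nonzero lam_nonzero
    by (simp add: omega.mult prod_zero_iff power_int_not_zero)
  then have "\<omega> (monomial z) ^ m = \<omega> lam ^ m * (\<Prod>i<N. \<omega> (z ! i) powi (coord_exp i * int m))" for m
    by (simp add: power_mult_distrib prod_power_distrib power_int_power')
  moreover have "monomial z \<noteq> 0"
    unfolding monomial_def using nonzero lam_nonzero by (simp add: prod_zero_iff power_int_not_zero)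
  moreover have "CARD('a) - 1 > 0" using card_UNIV_field_ge_2[where 'a='a] by simp
  ultimately show ?thesis using omega.sum_powers[of "monomial z"] by simp
qed

definition gauss_factor :: "'a \<Rightarrow> nat \<Rightarrow> nat \<Rightarrow> complex" where
  "gauss_factor t m i = (\<Sum>a\<in>UNIV - {0}. \<psi> (t * coord_sign i * a) * \<omega> a powi (coord_exp i * int m))"

definition character_sum :: "'a \<Rightarrow> complex" where
  "character_sum t = (\<Sum>m<CARD('a) - 1. \<omega> lam ^ m * (\<Prod>i<N. gauss_factor t m i))"

lemma sum_vectors_factor:
  "(\<Sum>z\<in>vectors. \<Prod>i<N. \<psi> (t * coord_sign i * z ! i) * \<omega> (z ! i) powi (coord_exp i * int m)) =
     (\<Prod>i<N. gauss_factor t m i)"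
  unfolding gauss_factor_def by (rule sum_lists_length_prod_nth) simp

lemma card_V_aff_character_sum:
  "of_nat (card (V_aff lam ps qs)) = 1 / (of_nat CARD('a) * of_nat (CARD('a) - 1)) * (\<Sum>t\<in>UNIV. character_sum t)"
proof -
  let ?P = "\<lambda>t z. \<Prod>i<N. \<psi> (t * coord_sign i * z ! i)"
  let ?C = "\<lambda>m z. \<omega> lam ^ m * (\<Prod>i<N. \<omega> (z ! i) powi (coord_exp i * int m))"
  have "finite vectors" by (simp add: finite_lists_length_eq)
  then have "of_nat (card (V_aff lam ps qs)) = (\<Sum>z\<in>vectors. if linear_form z = 0 \<and> monomial z = 1 then 1 else 0 :: complex)"
    unfolding V_aff_eq using sum.inter_filter[of vectors "\<lambda>_. 1 :: complex"] by simp
  also have "\<dots> = (\<Sum>z\<in>vectors. (if linear_form z = 0 then 1 else 0) * (if monomial z = 1 then 1 else 0 :: complex))"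
    by (intro sum.cong) auto
  also have "\<dots> = (\<Sum>z\<in>vectors. 1 / (of_nat CARD('a) * of_nat (CARD('a) - 1)) *
      ((\<Sum>t\<in>UNIV. ?P t z) * (\<Sum>m<CARD('a) - 1. ?C m z)))"
    by (intro sum.cong refl) (simp add: indicator_linear_form indicator_monomial)
  also have "\<dots> = 1 / (of_nat CARD('a) * of_nat (CARD('a) - 1)) *
      (\<Sum>z\<in>vectors. \<Sum>t\<in>UNIV. \<Sum>m<CARD('a) - 1. ?P t z * ?C m z)"
    unfolding sum_product by (simp add: sum_distrib_left)
  also have "(\<Sum>z\<in>vectors. \<Sum>t\<in>UNIV. \<Sum>m<CARD('a) - 1. ?P t z * ?C m z) =
      (\<Sum>t\<in>UNIV. \<Sum>m<CARD('a) - 1. \<Sum>z\<in>vectors. ?P t z * ?C m z)"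
    by (simp add: sum.swap[of _ vectors])
  also have "\<dots> = (\<Sum>t\<in>UNIV. character_sum t)"
    unfolding character_sum_def sum_vectors_factor[symmetric]
    by (simp add: sum_distrib_left prod.distrib mult_ac)
  finally show ?thesis .
qed

lemma gauss_factor_zero:
  "gauss_factor 0 m i =
     (if int (CARD('a) - 1) dvd coord_exp i * int m then of_nat (CARD('a) - 1) else 0)"
  unfolding gauss_factor_def by (simp add: omega.sum_power_int)

lemma exists_coord_exp_not_dvd:
  assumes "0 < m" and "m < CARD('a) - 1"
  shows "\<exists>i<N. \<not> int (CARD('a) - 1) dvd coord_exp i * int m"
proof (rule ccontr)
  define d where "d = CARD('a) - 1"
  assume "\<not> ?thesis"
  then have dvd_coord: "int d dvd coord_exp i * int m" if "i < N" for i
    using that unfolding d_def by blast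
  have "d dvd a * m" if a: "a \<in> set (ps @ qs)" for a
  proof -
    obtain i where "i < N" and "a = (ps @ qs) ! i" using a[unfolded in_set_conv_nth] by auto
    then have "int d dvd (if i < r then 1 else -1) * int (a * m)"
      using dvd_coord unfolding coord_exp_def by (simp add: mult.assoc)
    then show ?thesis by (simp split: if_splits flip: of_nat_mult)
  qed
  then have "d dvd m" using Gcd_eq_1 by (intro Gcd_eq_1_dvd_mult_imp_dvd) auto
  then show False using assms unfolding d_def by (auto dest: dvd_imp_le)
qed

lemma character_sum_zero: "character_sum 0 = of_nat (CARD('a) - 1) ^ N"
proof -
  define d where "d = CARD('a) - 1"
  have "0 \<in> {..<d}" using card_UNIV_field_ge_2[where 'a='a] unfolding d_def by simp
  then have "character_sum 0 = (\<Prod>i<N. gauss_factor 0 0 i) +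
      (\<Sum>m\<in>{..<d} - {0}. \<omega> lam ^ m * (\<Prod>i<N. gauss_factor 0 m i))"
    unfolding character_sum_def d_def[symmetric] by (simp add: sum.remove)
  also have "(\<Sum>m\<in>{..<d} - {0}. \<omega> lam ^ m * (\<Prod>i<N. gauss_factor 0 m i)) = 0"
  proof (intro sum.neutral ballI)
    fix m assume "m \<in> {..<d} - {0}"
    then obtain i where "i < N" "\<not> int d dvd coord_exp i * int m"
      using exists_coord_exp_not_dvd[of m] unfolding d_def by auto
    then show "\<omega> lam ^ m * (\<Prod>i<N. gauss_factor 0 m i) = 0"
      by (auto simp: gauss_factor_zero d_def intro!: prod_zero)
  qed
  finally show ?thesis by (simp add: gauss_factor_zero d_def)
qed

lemma prod_coord_sign_powers:
  assumes "t \<noteq> 0"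
  shows "(\<Prod>i<N. (t * coord_sign i) powi (- (coord_exp i * int m))) = ((-1) ^ sum_list qs) ^ m"
proof -
  have "(\<Prod>i<N. (t * coord_sign i) powi (- (coord_exp i * int m))) =
      (\<Prod>i<r. inverse (t ^ (ps ! i * m))) * (\<Prod>j<s. (- t) ^ (qs ! j * m))"
    unfolding prod_lessThan_add
    by (simp add: coord_sign_def coord_exp_def nth_append power_int_minus flip: of_nat_mult power_int_of_nat)
  also have "\<dots> = inverse (t ^ (sum_list ps * m)) * (- t) ^ (sum_list qs * m)"
    using prod_power_nth[of t ps] prod_power_nth[of "- t" qs]
    by (simp add: prod_inversef[unfolded comp_def])
  also have "(- t) ^ (sum_list qs * m) = (-1) ^ (sum_list qs * m) * t ^ (sum_list ps * m)"
    unfolding sums by (metis mult_minus1 power_mult_distrib)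
  also have "inverse (t ^ (sum_list ps * m)) * ((-1) ^ (sum_list qs * m) * t ^ (sum_list ps * m)) =
      ((-1) ^ sum_list qs) ^ m"
    using assms by (simp add: power_mult)
  finally show ?thesis .
qed

lemma character_term_nonzero:
  assumes t: "t \<noteq> 0"
  shows "\<omega> lam ^ m * (\<Prod>i<N. gauss_factor t m i) =
    (\<Prod>i<r. gsum \<psi> \<omega> (int (ps ! i) * int m)) * (\<Prod>j<s. gsum \<psi> \<omega> (- int (qs ! j) * int m))
    * \<omega> ((-1) ^ sum_list qs * lam) ^ m"
proof -
  have nonzero: "t * coord_sign i \<noteq> 0" for i
    using t by (simp add: coord_sign_def)
  have "(\<Prod>i<N. gauss_factor t m i) =
      (\<Prod>i<N. \<omega> (t * coord_sign i) powi (- (coord_exp i * int m))) * (\<Prod>i<N. gsum \<psi> \<omega> (coord_exp i * int m))"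
    unfolding gauss_factor_def omega.gsum_dilate[OF nonzero] by (rule prod.distrib)
  also have "(\<Prod>i<N. \<omega> (t * coord_sign i) powi (- (coord_exp i * int m))) =
      \<omega> (\<Prod>i<N. (t * coord_sign i) powi (- (coord_exp i * int m)))"
    by (rule omega.prod_power_int[symmetric]) (rule nonzero)
  also have "\<dots> = \<omega> (((-1) ^ sum_list qs) ^ m)"
    unfolding prod_coord_sign_powers[OF t] ..
  also have "(\<Prod>i<N. gsum \<psi> \<omega> (coord_exp i * int m)) =
      (\<Prod>i<r. gsum \<psi> \<omega> (int (ps ! i) * int m)) * (\<Prod>j<s. gsum \<psi> \<omega> (- int (qs ! j) * int m))"
    unfolding prod_lessThan_add by (simp add: coord_exp_def nth_append)
  moreover have "\<omega> lam ^ m * \<omega> (((-1) ^ sum_list qs) ^ m) = \<omega> ((-1) ^ sum_list qs * lam) ^ m"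
    using lam_nonzero by (simp add: omega.mult omega.power power_mult_distrib)
  ultimately show ?thesis by (simp add: mult_ac)
qed

lemma character_sum_nonzero:
  assumes "t \<noteq> 0"
  shows "character_sum t =
    (\<Sum>m = 0..CARD('a) - 2.
       (\<Prod>i<r. gsum \<psi> \<omega> (int (ps ! i) * int m)) * (\<Prod>j<s. gsum \<psi> \<omega> (- int (qs ! j) * int m))
       * \<omega> ((-1) ^ sum_list qs * lam) ^ m)"
proof -
  have "{0..CARD('a) - 2} = {..<CARD('a) - 1}"
    using card_UNIV_field_ge_2[where 'a='a] by auto
  then show ?thesis
    unfolding character_sum_def by (simp add: character_term_nonzero[OF assms])
qed

lemma card_V_lambda:
  "complex_of_nat (card (V_lambda lam ps qs)) =
    (of_nat CARD('a) - 1) ^ (length ps + length qs - 2) / of_nat CARD('a)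
    + 1 / (of_nat CARD('a) * (of_nat CARD('a) - 1)) *
      (\<Sum>m = 0..CARD('a) - 2.
         (\<Prod>i<length ps. gsum \<psi> \<omega> (int (ps ! i) * int m))
       * (\<Prod>j<length qs. gsum \<psi> \<omega> (- int (qs ! j) * int m))
       * (\<omega> ((-1) ^ sum_list qs * lam)) ^ m)"
  (is "?v = ?n ^ (N - 2) / ?q + 1 / (?q * ?n) * ?S")
proof -
  define v n q S where "v = ?v" and "n = ?n" and "q = ?q" and "S = ?S"
  have card_ge_2: "CARD('a) \<ge> 2" by (rule card_UNIV_field_ge_2)
  then have n_eq: "of_nat (CARD('a) - 1) = n" unfolding n_def by (simp add: of_nat_diff)
  have "(\<Sum>t\<in>UNIV. character_sum t) = character_sum 0 + (\<Sum>t\<in>UNIV - {0}. character_sum t)"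
    by (simp add: sum.remove)
  also have "\<dots> = n ^ N + n * S"
    using n_eq unfolding S_def by (simp add: character_sum_zero character_sum_nonzero card_Diff_singleton)
  finally have "n * v = 1 / (q * n) * (n ^ N + n * S)"
    using card_V_aff[OF sums, of lam] card_V_aff_character_sum length_ge_2 n_eq
    unfolding v_def q_def by force
  moreover have "N = Suc (Suc (N - 2))"
    using length_ge_2 by simp
  then have "n ^ N = n ^ (N - 2) * n * n"
    by (metis power_Suc2)
  moreover have "q \<noteq> 0" and n_nonzero: "n \<noteq> 0"
    using card_ge_2 unfolding q_def n_def by auto
  ultimately have "n * (n * q * v) = n * (n ^ (N - 2) * n + S)"
    by (simp add: field_simps)
  then have "n * q * v = n ^ (N - 2) * n + S"
    using n_nonzero by simp
  then have "v = n ^ (N - 2) / q + 1 / (q * n) * S"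
    using \<open>q \<noteq> 0\<close> n_nonzero by (simp add: field_simps)
  then show ?thesis unfolding v_def n_def q_def S_def .
qed

end

theorem mainTheorem12:
  fixes \<psi> \<omega> :: "'a::{field,finite} \<Rightarrow> complex"
    and ps qs :: "nat list" and lam :: 'a
  assumes psi_add: "\<forall>x y. \<psi> (x + y) = \<psi> x * \<psi> y"
    and psi_nz: "\<forall>x. \<psi> x \<noteq> 0"
    and psi_nontriv: "\<exists>x. \<psi> x \<noteq> 1"
    and omega_mult: "\<forall>x y. x \<noteq> 0 \<longrightarrow> y \<noteq> 0 \<longrightarrow> \<omega> (x * y) = \<omega> x * \<omega> y"
    and omega_nz: "\<forall>x. x \<noteq> 0 \<longrightarrow> \<omega> x \<noteq> 0"
    and omega_gen: "\<forall>k::nat. (\<forall>x. x \<noteq> 0 \<longrightarrow> \<omega> x ^ k = 1) \<longleftrightarrow> ((card (UNIV::'a set)) - 1) dvd k"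
    and ps_pos: "\<forall>a\<in>set ps. a > 0"
    and qs_pos: "\<forall>b\<in>set qs. b > 0"
    and sums: "sum_list ps = sum_list qs"
    and gcd1: "Gcd (set (ps @ qs)) = 1"
    and lam_nz: "lam \<noteq> 0"
  shows "complex_of_nat (card (V_lambda lam ps qs)) =
    (of_nat (card (UNIV::'a set)) - 1) ^ (length ps + length qs - 2) / of_nat (card (UNIV::'a set))
    + 1 / (of_nat (card (UNIV::'a set)) * (of_nat (card (UNIV::'a set)) - 1)) *
      (\<Sum>m = 0..(card (UNIV::'a set)) - 2.
         (\<Prod>i<length ps. gsum \<psi> \<omega> (int (ps!i) * int m))
       * (\<Prod>j<length qs. gsum \<psi> \<omega> (- int (qs!j) * int m))
       * (\<omega> ((-1) ^ sum_list qs * lam)) ^ m)"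
proof -
  interpret V_lambda_count \<psi> \<omega> ps qs lam
    by unfold_locales (use assms in auto)
  show ?thesis by (rule card_V_lambda)
qed

end
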